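(* If $f\in\mathcal F_{\mathrm{CSSA}}$ (with witnesses $Y_\ell,p_\ell,r_\ell,C_\ell,f_\ell,F_\ell,D_\ell$ as in the definition), then $f\log_+f\in\mathcal L^1(\mathbb{R}^d)$; more precisely $$\int_{\mathbb{R}^d}f(y)\log_+f(y)\,\mathrm{d}y\le\sum_{\ell:p_\ell>0}p_\ell\int_{Y_\ell}D_\ell(y)\,\mathrm{d}F_\ell(y)+d\sum_{\ell:p_\ell>0}p_\ell\log_+\!\Big(\frac{2}{r_\ell}\Big)<\infty.$$
   Context: $\log_+t=\max\{\log t,0\}$ for $t>0$, $\log_+0=0$. Densities are w.r.t. Lebesgue measure; $F(A)=\int_Af\,\mathrm{d}x$; $\operatorname{supp}(f)=\{x:f(x)>0\}$. Comparison cubes are closed axis-aligned cubes; partition cubes may be half-open so as to be disjoint. "A cube of side $r$ with a vertex at $y$" means a closed axis-aligned cube of side length $r$ having $y$ as one of its vertices. A family of cubes of common side length is adjacent if they have pairwise disjoint interiors and the union of their closures is connected. Definition ($\mathcal F_{\mathrm{FSSA}}$): a density $f$ on $\mathbb{R}^d$ belongs to $\mathcal F_{\mathrm{FSSA}}$ if there exist, for each $m\ge1$, a partition $\operatorname{supp}(f)=A^{(m)}_0\sqcup A^{(m)}_1\sqcup\cdots\sqcup A^{(m)}_m$ in which $A^{(m)}_1,\dots,A^{(m)}_m$ are adjacent cubes of common side length $h_m>0$ and $A^{(m)}_0$ is the remainder, such that: (i) $f$ is continuous on $\operatorname{supp}(f)$ except on a set of $F$-measure zero; (ii) there exist $r>0$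 and, for every $y\in\operatorname{supp}(f)$, a comparison cube $C(r,y)$ of side length $r$ containing $y$, such that $D_r(y)=\log\big(f(y)/\inf_{z\in C(r,y)}f(z)\big)$ is measurable on $\operatorname{supp}(f)$ and $\int_{\operatorname{supp}(f)}D_r\,\mathrm{d}F<\infty$; (iii) there exists $M\in\mathbb N$ such that for every $m\ge M$: (a) if $y\in A^{(m)}_0$ then $C(r,y)\cap A^{(m)}_0$ contains a cube of side $r/2$ with a vertex at $y$; (b) if $y\in\operatorname{supp}(f)\setminus A^{(m)}_0$ then $C(r,y)\cap(\operatorname{supp}(f)\setminus A^{(m)}_0)$ contains a cube of side $r/2$ with a vertex at $y$. Definition ($\mathcal F_{\mathrm{CSSA}}$): a density $f$ belongs to $\mathcal F_{\mathrm{CSSA}}$ if there exist a measurable partition $\operatorname{supp}(f)=\bigsqcup_{\ell\ge1}Y_\ell$ with $p_\ell=F(Y_\ell)$, and, for each $\ell$ with $p_\ell>0$, a scale $r_\ell>0$, comparison cubes $C_\ell(y)$ of side $r_\ell$ containing $y$ ($y\in Y_\ell$), and for every $m\ge1$ a partition $Y_\ell=A^{(m)}_{\ell,0}\sqcup\cdots\sqcup A^{(m)}_{\ell,m}$ with $A^{(m)}_{\ell,1},\dots,A^{(m)}_{\ell,m}$ adjacent cubes of common side $h_{\ell,m}>0$, such that for each $\ell$ with $p_\ell>0$ the normalized restriction $f_\ell=f\mathbf 1_{Y_\ell}/p_\ell$ satisfies the definition of $\mathcal F_{\mathrm{FSSA}}$ with these witnesses (scale $r_\ell$, cubes $C_\ell(y)$,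 these partitions), and, with $F_\ell$ the law of density $f_\ell$ and $D_\ell(y)=\log\big(f_\ell(y)/\inf_{z\in C_\ell(y)}f_\ell(z)\big)$ for $y\in Y_\ell$, one has $\sum_{\ell:p_\ell>0}p_\ell\int_{Y_\ell}D_\ell\,\mathrm{d}F_\ell<\infty$ and $\sum_{\ell:p_\ell>0}p_\ell\log_+(1/r_\ell)<\infty$. *)

theory Defs
  imports "HOL-Analysis.Analysis"
begin

text \<open>Ambient space: real ^ 'd, so d = CARD('d). Lebesgue measure is lebesgue.\<close>

definition logp :: "real \<Rightarrow> real" where
  "logp t = (if t > 0 then max (ln t) 0 else 0)"

definition is_density :: "(real ^ 'd \<Rightarrow> real) \<Rightarrow> bool" where
  "is_density f \<longleftrightarrow> f \<in> borel_measurable lebesgue \<and> (\<forall>x. 0 \<le> f x)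
     \<and> (\<integral>\<^sup>+ x. ennreal (f x) \<partial>lebesgue) = 1"

definition supp :: "(real ^ 'd \<Rightarrow> real) \<Rightarrow> (real ^ 'd) set" where
  "supp f = {x. f x > 0}"

definition lawF :: "(real ^ 'd \<Rightarrow> real) \<Rightarrow> (real ^ 'd) measure" where
  "lawF f = density lebesgue (\<lambda>x. ennreal (f x))"

definition closed_cube :: "real ^ 'd \<Rightarrow> real \<Rightarrow> (real ^ 'd) set" where
  "closed_cube a s = {x. \<forall>i. a $ i \<le> x $ i \<and> x $ i \<le> a $ i + s}"

definition open_cube :: "real ^ 'd \<Rightarrow> real \<Rightarrow> (real ^ 'd) set" where
  "open_cube a s = {x. \<forall>i. a $ i < x $ i \<and> x $ i < a $ i + s}"

definition is_closed_cube :: "(real ^ 'd) set \<Rightarrow> real \<Rightarrow> bool" where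
  "is_closed_cube C s \<longleftrightarrow> (\<exists>a. C = closed_cube a s)"

text \<open>Partition cube of side s: an axis-aligned cube of side s, possibly with
  part of its boundary removed (e.g. half-open).\<close>
definition partition_cube :: "(real ^ 'd) set \<Rightarrow> real \<Rightarrow> bool" where
  "partition_cube Q s \<longleftrightarrow> (\<exists>a. open_cube a s \<subseteq> Q \<and> Q \<subseteq> closed_cube a s)"

definition cube_with_vertex :: "(real ^ 'd) set \<Rightarrow> real \<Rightarrow> real ^ 'd \<Rightarrow> bool" where
  "cube_with_vertex Q s y \<longleftrightarrow>
     (\<exists>a. Q = closed_cube a s \<and> (\<forall>i. y $ i = a $ i \<or> y $ i = a $ i + s))"

definition adjacent :: "'i set \<Rightarrow> ('i \<Rightarrow> (real ^ 'd) set) \<Rightarrow> bool" where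
  "adjacent I A \<longleftrightarrow>
     (\<forall>i\<in>I. \<forall>j\<in>I. i \<noteq> j \<longrightarrow> interior (A i) \<inter> interior (A j) = {})
     \<and> connected (\<Union>i\<in>I. closure (A i))"

definition Dfun :: "(real ^ 'd \<Rightarrow> real) \<Rightarrow> (real ^ 'd \<Rightarrow> (real ^ 'd) set) \<Rightarrow> real ^ 'd \<Rightarrow> ennreal" where
  "Dfun f C y = (if Inf (f ` C y) > 0 then ennreal (ln (f y / Inf (f ` C y))) else \<infinity>)"

text \<open>The definition of F_FSSA, with explicit witnesses: scale r, comparison cubes C,
  partitions A m 0, ..., A m m (A m 0 the remainder) with cube side h m.\<close>
definition FSSA_wit ::
  "(real ^ 'd \<Rightarrow> real) \<Rightarrow> real \<Rightarrow> (real ^ 'd \<Rightarrow> (real ^ 'd) set)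
     \<Rightarrow> (nat \<Rightarrow> nat \<Rightarrow> (real ^ 'd) set) \<Rightarrow> (nat \<Rightarrow> real) \<Rightarrow> bool" where
  "FSSA_wit f r C A h \<longleftrightarrow>
     \<comment> \<open>partitions\<close>
     (\<forall>m\<ge>1. 0 < h m
        \<and> (\<forall>i\<in>{1..m}. partition_cube (A m i) (h m))
        \<and> adjacent {1..m} (A m)
        \<and> disjoint_family_on (A m) {0..m}
        \<and> (\<Union>i\<in>{0..m}. A m i) = supp f)
     \<comment> \<open>(i)\<close>
   \<and> (\<exists>N. N \<in> null_sets (lawF f) \<and>
          (\<forall>x \<in> supp f - N. continuous (at x within supp f) f))
     \<comment> \<open>(ii)\<close>
   \<and> 0 < r
   \<and> (\<forall>y\<in>supp f. is_closed_cube (C y) r \<and> y \<in> C y)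
   \<and> (\<lambda>y. Dfun f C y * indicator (supp f) y) \<in> borel_measurable lebesgue
   \<and> (\<integral>\<^sup>+ y. Dfun f C y * indicator (supp f) y \<partial>lawF f) < \<infinity>
     \<comment> \<open>(iii)\<close>
   \<and> (\<exists>M::nat. \<forall>m\<ge>M.
        (\<forall>y\<in>A m 0. \<exists>Q. cube_with_vertex Q (r/2) y \<and> Q \<subseteq> C y \<inter> A m 0)
      \<and> (\<forall>y\<in>supp f - A m 0. \<exists>Q. cube_with_vertex Q (r/2) y \<and> Q \<subseteq> C y \<inter> (supp f - A m 0)))"

definition FSSA :: "(real ^ 'd \<Rightarrow> real) set" where
  "FSSA = {f. is_density f \<and> (\<exists>r C A h. FSSA_wit f r C A h)}"

definition pY :: "(real ^ 'd \<Rightarrow> real) \<Rightarrow> (real ^ 'd) set \<Rightarrow> real" where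
  "pY f Y = measure (lawF f) Y"

definition frestr :: "(real ^ 'd \<Rightarrow> real) \<Rightarrow> (real ^ 'd) set \<Rightarrow> real ^ 'd \<Rightarrow> real" where
  "frestr f Y = (\<lambda>x. f x * indicator Y x / pY f Y)"

definition CSSA_wit ::
  "(real ^ 'd \<Rightarrow> real) \<Rightarrow> (nat \<Rightarrow> (real ^ 'd) set) \<Rightarrow> (nat \<Rightarrow> real)
     \<Rightarrow> (nat \<Rightarrow> real ^ 'd \<Rightarrow> (real ^ 'd) set)
     \<Rightarrow> (nat \<Rightarrow> nat \<Rightarrow> nat \<Rightarrow> (real ^ 'd) set) \<Rightarrow> (nat \<Rightarrow> nat \<Rightarrow> real) \<Rightarrow> bool" where
  "CSSA_wit f Y r C A h \<longleftrightarrow>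
     (\<forall>l\<ge>1. Y l \<in> sets lebesgue)
   \<and> disjoint_family_on Y {1..}
   \<and> (\<Union>l\<in>{1..}. Y l) = supp f
   \<and> (\<forall>l\<ge>1. pY f (Y l) > 0 \<longrightarrow> FSSA_wit (frestr f (Y l)) (r l) (C l) (A l) (h l))
   \<and> (\<Sum>l. if 1 \<le> l \<and> pY f (Y l) > 0 then
            ennreal (pY f (Y l)) *
              (\<integral>\<^sup>+ y. Dfun (frestr f (Y l)) (C l) y * indicator (Y l) y \<partial>lawF (frestr f (Y l)))
          else 0) < \<infinity>
   \<and> (\<Sum>l. if 1 \<le> l \<and> pY f (Y l) > 0 then ennreal (pY f (Y l) * logp (1 / r l)) else 0) < \<infinity>"

definition CSSA :: "(real ^ 'd \<Rightarrow> real) set" where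
  "CSSA = {f. is_density f \<and> (\<exists>Y r C A h. CSSA_wit f Y r C A h)}"

end

theory Submission
  imports Defs
begin

text \<open>On a piece \<open>Y\<^sub>l\<close> of positive mass we have \<open>f = p\<^sub>l f\<^sub>l\<close> with \<open>p\<^sub>l \<le> 1\<close>, so
  \<open>log\<^sub>+ f \<le> log\<^sub>+ f\<^sub>l\<close>. If \<open>m\<close> is the infimum of \<open>f\<^sub>l\<close> over the comparison cube of \<open>y\<close>, which has
  side \<open>r\<^sub>l\<close>, then \<open>m r\<^sub>l\<^sup>d \<le> \<integral> f\<^sub>l = 1\<close>, hence
  \<open>log f\<^sub>l(y) = D\<^sub>l(y) + log m \<le> D\<^sub>l(y) + d log\<^sub>+(1/r\<^sub>l)\<close>. Integrating against \<open>f\<^sub>l\<close> and summing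
  over the pieces with weights \<open>p\<^sub>l\<close> gives the bound; it is finite because
  \<open>log\<^sub>+(2/r) \<le> log 2 + log\<^sub>+(1/r)\<close> and \<open>\<Sum> p\<^sub>l \<le> 1\<close>.\<close>

lemma logp_nonneg: "0 \<le> logp t"
  by (simp add: logp_def)

lemma logp_mono:
  assumes "s \<le> t"
  shows "logp s \<le> logp t"
  using assms by (auto simp: logp_def max_def)

lemma logp_mult_le:
  assumes "0 \<le> s"
  shows "logp (s * t) \<le> logp s + logp t"
proof (cases "0 < s \<and> 0 < t")
  case True
  then have "ln (s * t) \<le> logp s + logp t"
    by (simp add: ln_mult logp_def add_mono)
  then show ?thesis
    by (simp add: logp_def logp_nonneg add_nonneg_nonneg)
next
  case False
  with assms have "s * t \<le> 0"
    by (auto simp: mult_nonneg_nonpos not_less)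
  then show ?thesis
    by (simp add: logp_def logp_nonneg add_nonneg_nonneg)
qed

lemma borel_measurable_logp [measurable]: "logp \<in> borel_measurable borel"
  unfolding logp_def by measurable

lemma logp_le_ln_div_add:
  fixes x m r :: real
  assumes "0 < m" "m \<le> x" "0 < r" "m * r ^ n \<le> 1"
  shows "logp x \<le> ln (x / m) + real n * logp (1 / r)"
proof -
  have "ln m + real n * ln r \<le> 0"
    using assms ln_le_zero_iff[of "m * r ^ n"] by (simp add: ln_mult ln_realpow)
  moreover have "- ln r \<le> logp (1 / r)"
    using assms(3) by (simp add: logp_def ln_div)
  ultimately have "ln x \<le> ln (x / m) + real n * logp (1 / r)"
    using assms mult_left_mono[of "- ln r" "logp (1 / r)" "real n"] by (simp add: ln_div)
  moreover have "0 \<le> ln (x / m) + real n * logp (1 / r)"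
    using assms by (simp add: logp_nonneg)
  ultimately show ?thesis
    by (simp add: logp_def)
qed

lemma closed_cube_eq_cbox: "closed_cube a s = cbox a (\<chi> i. a $ i + s)"
  by (auto simp: closed_cube_def mem_box_cart)

lemma closed_cube_in_sets_lebesgue [measurable]: "closed_cube a s \<in> sets lebesgue"
  by (simp add: closed_cube_eq_cbox)

lemma emeasure_closed_cube:
  fixes a :: "real ^ 'd"
  assumes "0 \<le> s"
  shows "emeasure lebesgue (closed_cube a s) = ennreal (s ^ CARD('d))"
proof -
  let ?Q = "cbox a (\<chi> i. a $ i + s)"
  have "a \<in> ?Q"
    using assms by (simp add: mem_box_cart)
  then have "measure lborel ?Q = s ^ CARD('d)"
    by (subst content_cbox_cart) auto
  moreover have "emeasure lborel ?Q = ennreal (measure lborel ?Q)"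
    using emeasure_lborel_cbox_finite by (intro emeasure_eq_ennreal_measure) (simp add: less_top)
  ultimately show ?thesis
    by (simp add: closed_cube_eq_cbox)
qed

lemma lower_bound_on_closed_cube:
  fixes g :: "real ^ 'd \<Rightarrow> real"
  assumes "(\<integral>\<^sup>+ x. ennreal (g x) \<partial>lebesgue) \<le> 1" and "0 \<le> m" and "0 \<le> s"
    and "\<And>z. z \<in> closed_cube a s \<Longrightarrow> m \<le> g z"
  shows "m * s ^ CARD('d) \<le> 1"
proof -
  have "ennreal (m * s ^ CARD('d)) = ennreal m * emeasure lebesgue (closed_cube a s)"
    by (subst emeasure_closed_cube[OF assms(3)]) (simp add: ennreal_mult assms(2,3))
  also have "\<dots> = (\<integral>\<^sup>+ z. ennreal m * indicator (closed_cube a s) z \<partial>lebesgue)"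
    by (simp add: nn_integral_cmult_indicator)
  also have "\<dots> \<le> (\<integral>\<^sup>+ z. ennreal (g z) \<partial>lebesgue)"
    using assms(4) by (intro nn_integral_mono) (auto split: split_indicator intro: ennreal_leI)
  also have "\<dots> \<le> 1"
    by (rule assms(1))
  finally show ?thesis
    by (simp add: ennreal_le_1)
qed

lemma is_densityD:
  assumes "is_density f"
  shows "f \<in> borel_measurable lebesgue" "0 \<le> f x" "(\<integral>\<^sup>+ x. ennreal (f x) \<partial>lebesgue) = 1"
  using assms by (auto simp: is_density_def)

lemma sets_lawF [measurable_cong]: "sets (lawF f) = sets lebesgue"
  by (simp add: lawF_def)

lemma emeasure_lawF:
  assumes "is_density f" and "A \<in> sets lebesgue"
  shows "emeasure (lawF f) A = (\<integral>\<^sup>+ x. ennreal (f x) * indicator A x \<partial>lebesgue)"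
  using assms by (simp add: lawF_def emeasure_density is_densityD)

lemma emeasure_lawF_le_1:
  assumes "is_density f"
  shows "emeasure (lawF f) A \<le> 1"
proof -
  have "emeasure (lawF f) A \<le> emeasure (lawF f) (space (lawF f))"
    by (rule emeasure_space)
  also have "\<dots> = 1"
    using emeasure_lawF[OF assms, of UNIV] is_densityD[OF assms] by (simp add: lawF_def)
  finally show ?thesis .
qed

lemma emeasure_lawF_eq_pY:
  assumes "is_density f"
  shows "emeasure (lawF f) A = ennreal (pY f A)"
  unfolding pY_def
  by (intro emeasure_eq_ennreal_measure neq_top_trans[OF ennreal_one_neq_top emeasure_lawF_le_1[OF assms]])

lemma pY_le_1:
  assumes "is_density f"
  shows "pY f A \<le> 1"
  using emeasure_lawF_le_1[OF assms, of A] by (simp add: emeasure_lawF_eq_pY[OF assms] ennreal_le_1)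

lemma logp_le_Dfun:
  fixes g :: "real ^ 'd \<Rightarrow> real"
  assumes "is_density g" and "is_closed_cube (C y) r" and "y \<in> C y" and "0 < r" and "0 < g y"
  shows "ennreal (logp (g y)) \<le> Dfun g C y + of_nat CARD('d) * ennreal (logp (1 / r))"
proof (cases "0 < Inf (g ` C y)")
  case True
  define m where "m = Inf (g ` C y)"
  obtain a where a: "C y = closed_cube a r"
    using assms(2) by (auto simp: is_closed_cube_def)
  have "bdd_below (g ` C y)"
    using is_densityD(2)[OF assms(1)] by (auto intro: bdd_belowI[of _ 0])
  then have m_le: "m \<le> g z" if "z \<in> C y" for z
    using that by (auto simp: m_def intro: cInf_lower)
  have "m * r ^ CARD('d) \<le> 1"
    using True assms(4) m_le is_densityD(3)[OF assms(1)]
    by (intro lower_bound_on_closed_cube[of g m r a]) (auto simp: a m_def)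
  then have "logp (g y) \<le> ln (g y / m) + real CARD('d) * logp (1 / r)"
    using True assms(3,4) m_le by (intro logp_le_ln_div_add) (auto simp: m_def)
  then have "ennreal (logp (g y)) \<le> ennreal (ln (g y / m) + real CARD('d) * logp (1 / r))"
    by (rule ennreal_leI)
  also have "\<dots> = Dfun g C y + of_nat CARD('d) * ennreal (logp (1 / r))"
    using True assms(3) m_le
    by (simp add: Dfun_def m_def logp_nonneg ennreal_plus ennreal_mult ennreal_of_nat_eq_real_of_nat)
  finally show ?thesis .
qed (simp add: Dfun_def)

lemma supp_in_sets_lebesgue [measurable]:
  assumes "f \<in> borel_measurable lebesgue"
  shows "supp f \<in> sets lebesgue"
proof -
  have "{x \<in> space lebesgue. 0 < f x} \<in> sets lebesgue"
    using assms by measurable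
  then show ?thesis
    by (simp add: supp_def)
qed

lemma nn_integral_logp_le_FSSA_wit:
  fixes g :: "real ^ 'd \<Rightarrow> real"
  assumes dens: "is_density g" and W: "FSSA_wit g r C A h"
  shows "(\<integral>\<^sup>+ y. ennreal (g y * logp (g y)) \<partial>lebesgue)
    \<le> (\<integral>\<^sup>+ y. Dfun g C y * indicator (supp g) y \<partial>lawF g) + of_nat CARD('d) * ennreal (logp (1 / r))"
proof -
  let ?D = "\<lambda>y. Dfun g C y * indicator (supp g) y"
  define L where "L = of_nat CARD('d) * ennreal (logp (1 / r))"
  have r: "0 < r" and cubes: "\<And>y. y \<in> supp g \<Longrightarrow> is_closed_cube (C y) r \<and> y \<in> C y"
    and D_meas [measurable]: "?D \<in> borel_measurable lebesgue"
    using W by (auto simp: FSSA_wit_def)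
  note g_meas [measurable] = is_densityD(1)[OF dens]
  have "ennreal (g y * logp (g y)) \<le> ennreal (g y) * (?D y + L * indicator (supp g) y)" for y
  proof (cases "y \<in> supp g")
    case True
    then have "ennreal (logp (g y)) \<le> Dfun g C y + L"
      using logp_le_Dfun[OF dens _ _ r] cubes by (auto simp: L_def supp_def)
    then show ?thesis
      using True is_densityD(2)[OF dens, of y] by (simp add: ennreal_mult' mult_left_mono)
  qed (simp add: supp_def logp_def)
  then have "(\<integral>\<^sup>+ y. ennreal (g y * logp (g y)) \<partial>lebesgue)
      \<le> (\<integral>\<^sup>+ y. ennreal (g y) * (?D y + L * indicator (supp g) y) \<partial>lebesgue)"
    by (rule nn_integral_mono)
  also have "\<dots> = (\<integral>\<^sup>+ y. ?D y + L * indicator (supp g) y \<partial>lawF g)"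
    unfolding lawF_def by (rule nn_integral_density[symmetric]) measurable
  also have "\<dots> = (\<integral>\<^sup>+ y. ?D y \<partial>lawF g) + L * emeasure (lawF g) (supp g)"
    by (simp add: nn_integral_add nn_integral_cmult_indicator)
  also have "\<dots> \<le> (\<integral>\<^sup>+ y. ?D y \<partial>lawF g) + L"
    using mult_left_mono[OF emeasure_lawF_le_1[OF dens], of L] by (intro add_left_mono) simp
  finally show ?thesis
    by (simp add: L_def)
qed

lemma is_density_frestr:
  assumes dens: "is_density f" and Y: "Y \<in> sets lebesgue" and p: "0 < pY f Y"
  shows "is_density (frestr f Y)"
proof -
  note f_meas [measurable] = is_densityD(1)[OF dens]
  have "(\<integral>\<^sup>+ x. ennreal (frestr f Y x) \<partial>lebesgue)
      = (\<integral>\<^sup>+ x. ennreal (f x) * indicator Y x * ennreal (1 / pY f Y) \<partial>lebesgue)"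
    using p is_densityD(2)[OF dens]
    by (intro nn_integral_cong) (auto simp: frestr_def divide_inverse ennreal_mult' split: split_indicator)
  also have "\<dots> = emeasure (lawF f) Y * ennreal (1 / pY f Y)"
    using Y by (simp add: nn_integral_multc emeasure_lawF[OF dens])
  also have "\<dots> = 1"
    using p by (simp add: emeasure_lawF_eq_pY[OF dens] ennreal_mult'[symmetric])
  finally show ?thesis
    using Y p is_densityD(2)[OF dens] by (auto simp: is_density_def frestr_def)
qed

lemma supp_frestr:
  assumes "is_density f" and "0 < pY f Y"
  shows "supp (frestr f Y) = supp f \<inter> Y"
  using assms by (auto simp: supp_def frestr_def zero_less_divide_iff split: split_indicator)

lemma nn_integral_logp_restrict_le:
  assumes dens: "is_density f" and Y: "Y \<in> sets lebesgue" and p: "0 < pY f Y"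
  shows "(\<integral>\<^sup>+ y. ennreal (f y * logp (f y)) * indicator Y y \<partial>lebesgue)
    \<le> ennreal (pY f Y) * (\<integral>\<^sup>+ y. ennreal (frestr f Y y * logp (frestr f Y y)) \<partial>lebesgue)"
proof -
  let ?g = "frestr f Y"
  note g_dens = is_density_frestr[OF dens Y p]
  note g_meas [measurable] = is_densityD(1)[OF g_dens]
  have "ennreal (f y * logp (f y)) * indicator Y y \<le> ennreal (pY f Y) * ennreal (?g y * logp (?g y))"
    for y
  proof (cases "y \<in> Y")
    case True
    then have f: "f y = pY f Y * ?g y"
      using p by (simp add: frestr_def)
    have "logp (f y) \<le> logp (?g y)"
      unfolding f using p pY_le_1[OF dens] is_densityD(2)[OF g_dens]
      by (intro logp_mono mult_left_le_one_le) auto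
    then have "f y * logp (f y) \<le> pY f Y * (?g y * logp (?g y))"
      unfolding f using p is_densityD(2)[OF g_dens, of y] by (simp add: mult_left_mono)
    then show ?thesis
      using True p by (simp add: ennreal_mult'[symmetric] ennreal_leI)
  qed simp
  then have "(\<integral>\<^sup>+ y. ennreal (f y * logp (f y)) * indicator Y y \<partial>lebesgue)
      \<le> (\<integral>\<^sup>+ y. ennreal (pY f Y) * ennreal (?g y * logp (?g y)) \<partial>lebesgue)"
    by (rule nn_integral_mono)
  also have "\<dots> = ennreal (pY f Y) * (\<integral>\<^sup>+ y. ennreal (?g y * logp (?g y)) \<partial>lebesgue)"
    by (rule nn_integral_cmult) measurable
  finally show ?thesis .
qed

lemma nn_integral_logp_piece_le:
  fixes f :: "real ^ 'd \<Rightarrow> real"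
  assumes dens: "is_density f" and Y: "Y \<in> sets lebesgue" "Y \<subseteq> supp f" and p: "0 < pY f Y"
    and W: "FSSA_wit (frestr f Y) r C A h"
  shows "(\<integral>\<^sup>+ y. ennreal (f y * logp (f y)) * indicator Y y \<partial>lebesgue)
    \<le> ennreal (pY f Y) * (\<integral>\<^sup>+ y. Dfun (frestr f Y) C y * indicator Y y \<partial>lawF (frestr f Y))
      + of_nat CARD('d) * ennreal (pY f Y * logp (2 / r))"
proof -
  let ?g = "frestr f Y"
  let ?D = "\<integral>\<^sup>+ y. Dfun ?g C y * indicator Y y \<partial>lawF ?g"
  have supp_g: "supp ?g = Y"
    using supp_frestr[OF dens p] Y(2) by auto
  have "0 < r"
    using W by (simp add: FSSA_wit_def)
  then have "logp (1 / r) \<le> logp (2 / r)"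
    by (intro logp_mono divide_right_mono) auto
  then have L: "of_nat CARD('d) * ennreal (logp (1 / r)) \<le> of_nat CARD('d) * ennreal (logp (2 / r))"
    by (intro mult_left_mono ennreal_leI) auto
  have "(\<integral>\<^sup>+ y. ennreal (f y * logp (f y)) * indicator Y y \<partial>lebesgue)
      \<le> ennreal (pY f Y) * (\<integral>\<^sup>+ y. ennreal (?g y * logp (?g y)) \<partial>lebesgue)"
    by (rule nn_integral_logp_restrict_le[OF dens Y(1) p])
  also have "\<dots> \<le> ennreal (pY f Y) * (?D + of_nat CARD('d) * ennreal (logp (1 / r)))"
    using nn_integral_logp_le_FSSA_wit[OF is_density_frestr[OF dens Y(1) p] W]
    by (intro mult_left_mono) (simp_all add: supp_g)
  also have "\<dots> \<le> ennreal (pY f Y) * (?D + of_nat CARD('d) * ennreal (logp (2 / r)))"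
    by (rule mult_left_mono[OF add_left_mono[OF L]]) simp
  also have "\<dots> = ennreal (pY f Y) * ?D + of_nat CARD('d) * ennreal (pY f Y * logp (2 / r))"
    using p by (simp add: distrib_left ennreal_mult' ac_simps)
  finally show ?thesis .
qed

lemma nn_integral_logp_null_piece:
  assumes dens: "is_density f" and Y [measurable]: "Y \<in> sets lebesgue" and p: "pY f Y = 0"
  shows "(\<integral>\<^sup>+ y. ennreal (f y * logp (f y)) * indicator Y y \<partial>lebesgue) = 0"
proof -
  note f_meas [measurable] = is_densityD(1)[OF dens]
  have "(\<integral>\<^sup>+ x. ennreal (f x) * indicator Y x \<partial>lebesgue) = 0"
    using p by (simp add: emeasure_lawF[OF dens Y, symmetric] emeasure_lawF_eq_pY[OF dens])
  then have "AE x in lebesgue. ennreal (f x) * indicator Y x = 0"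
    by (subst (asm) nn_integral_0_iff_AE) measurable
  then have "AE x in lebesgue. ennreal (f x * logp (f x)) * indicator Y x = 0"
    by eventually_elim (auto simp: logp_def split: split_indicator)
  then show ?thesis
    by (simp add: nn_integral_0_iff_AE)
qed

lemma suminf_emeasure_from_1:
  assumes "disjoint_family_on Y {1..}" and "\<And>l. 1 \<le> l \<Longrightarrow> Y l \<in> sets M"
  shows "(\<Sum>l. if 1 \<le> l then emeasure M (Y l) else 0) = emeasure M (\<Union>l\<in>{1..}. Y l)"
proof -
  define Y' where "Y' l = (if 1 \<le> l then Y l else {})" for l
  have "(\<Sum>l. if 1 \<le> l then emeasure M (Y l) else 0) = (\<Sum>l. emeasure M (Y' l))"
    by (rule arg_cong[where f = suminf]) (simp add: fun_eq_iff Y'_def)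
  also have "\<dots> = emeasure M (\<Union>l. Y' l)"
    using assms by (intro suminf_emeasure) (auto simp: Y'_def disjoint_family_on_def)
  also have "(\<Union>l. Y' l) = (\<Union>l\<in>{1..}. Y l)"
    by (auto simp: Y'_def)
  finally show ?thesis .
qed

lemma nn_integral_eq_suminf_partition:
  assumes disj: "disjoint_family_on Y {1..}" and Y: "\<And>l. 1 \<le> l \<Longrightarrow> Y l \<in> sets M"
    and g [measurable]: "g \<in> borel_measurable M"
    and vanish: "\<And>x. x \<notin> (\<Union>l\<in>{1..}. Y l) \<Longrightarrow> g x = 0"
  shows "integral\<^sup>N M g = (\<Sum>l. if 1 \<le> l then \<integral>\<^sup>+ x. g x * indicator (Y l) x \<partial>M else 0)"
proof -
  have U [measurable]: "(\<Union>l\<in>{1..}. Y l) \<in> sets M"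
    using Y by (intro sets.countable_UN') auto
  have "integral\<^sup>N M g = (\<integral>\<^sup>+ x. g x * indicator (\<Union>l\<in>{1..}. Y l) x \<partial>M)"
    using vanish by (intro nn_integral_cong) (auto split: split_indicator)
  also have "\<dots> = emeasure (density M g) (\<Union>l\<in>{1..}. Y l)"
    by (intro emeasure_density[symmetric] g U)
  also have "\<dots> = (\<Sum>l. if 1 \<le> l then emeasure (density M g) (Y l) else 0)"
    using disj Y by (intro suminf_emeasure_from_1[symmetric]) auto
  also have "\<dots> = (\<Sum>l. if 1 \<le> l then \<integral>\<^sup>+ x. g x * indicator (Y l) x \<partial>M else 0)"
    using Y by (intro arg_cong[where f = suminf] ext) (simp add: emeasure_density g)
  finally show ?thesis .
qed

lemma suminf_pY_le_1:
  assumes dens: "is_density f" and disj: "disjoint_family_on Y {1..}"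
    and Y: "\<And>l. 1 \<le> l \<Longrightarrow> Y l \<in> sets lebesgue"
  shows "(\<Sum>l. if 1 \<le> l \<and> 0 < pY f (Y l) then ennreal (pY f (Y l)) else 0) \<le> 1"
proof -
  have "(\<Sum>l. if 1 \<le> l \<and> 0 < pY f (Y l) then ennreal (pY f (Y l)) else 0)
      \<le> (\<Sum>l. if 1 \<le> l then emeasure (lawF f) (Y l) else 0)"
    by (intro suminf_le) (auto simp: emeasure_lawF_eq_pY[OF dens])
  also have "\<dots> = emeasure (lawF f) (\<Union>l\<in>{1..}. Y l)"
    using disj Y by (intro suminf_emeasure_from_1) auto
  also have "\<dots> \<le> 1"
    by (rule emeasure_lawF_le_1[OF dens])
  finally show ?thesis .
qed

lemma suminf_logp_two_div_le:
  fixes p r :: "nat \<Rightarrow> real"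
  assumes "\<And>l. c l \<Longrightarrow> 0 \<le> p l"
  shows "(\<Sum>l. if c l then ennreal (p l * logp (2 / r l)) else 0)
    \<le> ennreal (ln 2) * (\<Sum>l. if c l then ennreal (p l) else 0)
      + (\<Sum>l. if c l then ennreal (p l * logp (1 / r l)) else 0)"
proof -
  have "(if c l then ennreal (p l * logp (2 / r l)) else 0)
      \<le> ennreal (ln 2) * (if c l then ennreal (p l) else 0)
        + (if c l then ennreal (p l * logp (1 / r l)) else 0)" for l
  proof (cases "c l")
    case True
    have "logp (2 / r l) \<le> ln 2 + logp (1 / r l)"
      using logp_mult_le[of 2 "1 / r l"] by (simp add: logp_def)
    then have "p l * logp (2 / r l) \<le> p l * (ln 2 + logp (1 / r l))"
      using assms[OF True] by (rule mult_left_mono)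
    then have "p l * logp (2 / r l) \<le> ln 2 * p l + p l * logp (1 / r l)"
      by (simp add: algebra_simps)
    then have "ennreal (p l * logp (2 / r l)) \<le> ennreal (ln 2 * p l + p l * logp (1 / r l))"
      by (rule ennreal_leI)
    also have "\<dots> = ennreal (ln 2) * ennreal (p l) + ennreal (p l * logp (1 / r l))"
      using assms[OF True] by (simp add: ennreal_plus ennreal_mult logp_nonneg)
    finally show ?thesis
      using True by simp
  qed simp
  then have "(\<Sum>l. if c l then ennreal (p l * logp (2 / r l)) else 0)
      \<le> (\<Sum>l. ennreal (ln 2) * (if c l then ennreal (p l) else 0)
        + (if c l then ennreal (p l * logp (1 / r l)) else 0))"
    by (intro suminf_le) auto
  then show ?thesis
    by (simp add: suminf_add[symmetric])
qed

lemma suminf_pY_logp_two_div_finite: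
  assumes "is_density f" and "disjoint_family_on Y {1..}" and "\<And>l. 1 \<le> l \<Longrightarrow> Y l \<in> sets lebesgue"
    and "(\<Sum>l. if 1 \<le> l \<and> 0 < pY f (Y l) then ennreal (pY f (Y l) * logp (1 / r l)) else 0) < \<infinity>"
  shows "(\<Sum>l. if 1 \<le> l \<and> 0 < pY f (Y l) then ennreal (pY f (Y l) * logp (2 / r l)) else 0) < \<infinity>"
proof -
  let ?P = "\<Sum>l. if 1 \<le> l \<and> 0 < pY f (Y l) then ennreal (pY f (Y l)) else 0"
  let ?Q = "\<Sum>l. if 1 \<le> l \<and> 0 < pY f (Y l) then ennreal (pY f (Y l) * logp (1 / r l)) else 0"
  have "(\<Sum>l. if 1 \<le> l \<and> 0 < pY f (Y l) then ennreal (pY f (Y l) * logp (2 / r l)) else 0)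
      \<le> ennreal (ln 2) * ?P + ?Q"
    by (rule suminf_logp_two_div_le) simp
  also have "\<dots> \<le> ennreal (ln 2) * 1 + ?Q"
    using suminf_pY_le_1[OF assms(1-3)] by (intro add_right_mono mult_left_mono) auto
  also have "\<dots> < \<infinity>"
    using assms(4) by (simp add: less_top)
  finally show ?thesis .
qed

theorem mainTheorem12:
  fixes f :: "real ^ 'd \<Rightarrow> real"
    and Y :: "nat \<Rightarrow> (real ^ 'd) set" and r :: "nat \<Rightarrow> real"
    and C :: "nat \<Rightarrow> real ^ 'd \<Rightarrow> (real ^ 'd) set"
    and A :: "nat \<Rightarrow> nat \<Rightarrow> nat \<Rightarrow> (real ^ 'd) set" and h :: "nat \<Rightarrow> nat \<Rightarrow> real"
  assumes "is_density f"
    and "CSSA_wit f Y r C A h"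
  shows "integrable lebesgue (\<lambda>y. f y * logp (f y))
    \<and> (\<integral>\<^sup>+ y. ennreal (f y * logp (f y)) \<partial>lebesgue)
          \<le> (\<Sum>l. if 1 \<le> l \<and> pY f (Y l) > 0 then
                ennreal (pY f (Y l)) *
                  (\<integral>\<^sup>+ y. Dfun (frestr f (Y l)) (C l) y * indicator (Y l) y \<partial>lawF (frestr f (Y l)))
              else 0)
            + of_nat CARD('d) *
              (\<Sum>l. if 1 \<le> l \<and> pY f (Y l) > 0 then ennreal (pY f (Y l) * logp (2 / r l)) else 0)
    \<and> (\<Sum>l. if 1 \<le> l \<and> pY f (Y l) > 0 then
                ennreal (pY f (Y l)) *
                  (\<integral>\<^sup>+ y. Dfun (frestr f (Y l)) (C l) y * indicator (Y l) y \<partial>lawF (frestr f (Y l)))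
              else 0)
            + of_nat CARD('d) *
              (\<Sum>l. if 1 \<le> l \<and> pY f (Y l) > 0 then ennreal (pY f (Y l) * logp (2 / r l)) else 0) < \<infinity>"
proof -
  define T where "T = (\<lambda>l. if 1 \<le> l \<and> pY f (Y l) > 0 then ennreal (pY f (Y l)) *
    (\<integral>\<^sup>+ y. Dfun (frestr f (Y l)) (C l) y * indicator (Y l) y \<partial>lawF (frestr f (Y l))) else 0)"
  define S where "S = (\<lambda>l. if 1 \<le> l \<and> pY f (Y l) > 0 then ennreal (pY f (Y l) * logp (2 / r l)) else 0)"
  note f_meas [measurable] = is_densityD(1)[OF assms(1)]
  have Y: "\<And>l. 1 \<le> l \<Longrightarrow> Y l \<in> sets lebesgue" and disj: "disjoint_family_on Y {1..}"
    and UY: "(\<Union>l\<in>{1..}. Y l) = supp f"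
    and W: "\<And>l. 1 \<le> l \<Longrightarrow> pY f (Y l) > 0 \<Longrightarrow> FSSA_wit (frestr f (Y l)) (r l) (C l) (A l) (h l)"
    and T_fin: "suminf T < \<infinity>"
    and Q_fin: "(\<Sum>l. if 1 \<le> l \<and> 0 < pY f (Y l) then ennreal (pY f (Y l) * logp (1 / r l)) else 0) < \<infinity>"
    using assms(2) by (auto simp: CSSA_wit_def T_def)
  have S_fin: "suminf S < \<infinity>"
    using suminf_pY_logp_two_div_finite[OF assms(1) disj Y Q_fin] by (simp add: S_def)
  have piece: "(if 1 \<le> l then \<integral>\<^sup>+ y. ennreal (f y * logp (f y)) * indicator (Y l) y \<partial>lebesgue else 0)
      \<le> T l + of_nat CARD('d) * S l" for l
    using nn_integral_logp_piece_le[OF assms(1) Y _ _ W] nn_integral_logp_null_piece[OF assms(1) Y] UY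
    by (auto simp: T_def S_def pY_def not_less measure_le_0_iff)
  have "(\<integral>\<^sup>+ y. ennreal (f y * logp (f y)) \<partial>lebesgue)
      = (\<Sum>l. if 1 \<le> l then \<integral>\<^sup>+ y. ennreal (f y * logp (f y)) * indicator (Y l) y \<partial>lebesgue else 0)"
    using disj Y UY by (intro nn_integral_eq_suminf_partition) (auto simp: supp_def logp_def)
  also have "\<dots> \<le> suminf T + of_nat CARD('d) * suminf S"
    using suminf_le[OF piece] by (simp add: suminf_add[symmetric])
  finally have bound:
    "(\<integral>\<^sup>+ y. ennreal (f y * logp (f y)) \<partial>lebesgue) \<le> suminf T + of_nat CARD('d) * suminf S" .
  moreover have finite: "suminf T + of_nat CARD('d) * suminf S < \<infinity>"
    using T_fin S_fin by (simp add: ennreal_mult_less_top of_nat_less_top less_top)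
  moreover have "integrable lebesgue (\<lambda>y. f y * logp (f y))"
    using le_less_trans[OF bound finite] is_densityD(2)[OF assms(1)]
    by (intro integrableI_nonneg) (auto simp: logp_nonneg)
  ultimately show ?thesis
    by (simp add: T_def S_def)
qed

end
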